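(* Consider on-line exploration of rings with homebase $v_0$ and invoking cost $q\ge 0$. Let $\mathcal{S}$ be the on-line strategy (procedure RingOnline) defined as follows. Invoke an agent $a_1$ at $v_0$. Let $f_1,f_{-1}$ be the two edges incident to $v_0$ with $w(f_1)\le w(f_{-1})$. Maintain an edge $R$ (initially $R=f_1$), an edge $L$ (initially $L=f_{-1}$) and a flag $s$ (initially $s=1$). Repeat until all vertices are explored: (i) while $w(L)+q\cdot s\ge w(R)$ and not all vertices are explored: $a_1$ traverses $R$, and $R$ is reset to the unexplored edge incident to the vertex now occupied by $a_1$; (ii) if $s=1$ and $w(f_{-1})+q<w(R)$: invoke a second agent $a_2$ at $v_0$, $a_2$ traverses $f_{-1}$, $L$ is reset to the unexplored edge incident to the vertex now occupied by $a_2$, and $s$ is set to $0$; (iii) if $s=0$: while $w(L)<w(R)$ and not all vertices are explored: $a_2$ traverses $L$, and $L$ is reset to the unexplored edge incident to the vertex now occupied by $a_2$. Then $\mathcal{S}$ is $2$-competitive on rings: for every edge-weighted ring $C$ with homebase $v_0$, $\mathcal{S}(C)\le 2\,\mathcal{S}^{opt}(C)$.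
   Context: Exploration model: a connected undirected graph with positive edge weights $w$ and a designated homebase vertex is given, together with an invoking cost $q\ge 0$. A strategy is a sequence of moves, each either (1) invoking a new agent, which appears at the homebase, or (2) an agent traversing an edge incident to its current vertex. A vertex is explored when first visited; a strategy explores the graph when every vertex has been visited by some agent (agents need not return to the homebase). If $k$ agents are used and agent $i$ traverses total distance $d_i$ (sum of weights of traversed edges, with multiplicity), the cost is $kq+\sum_i d_i$. A ring is a cycle graph with $n\ge 3$ vertices. In the on-line setting the graph is not known in advance: an agent at a vertex $v$ knows the weights of the edges incident to $v$ and whether each neighbour of $v$ is already explored, and agents communicate freely; the strategy's moves depend only on information revealed so far. $\mathcal{S}(C)$ denotes the cost of strategy $\mathcal{S}$ on $C$, and $\mathcal{S}^{opt}(C)$ the minimum cost of an off-line strategy (with full knowledge of $C$) exploring $C$ with the same $q$ and homebase. *)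

theory Defs
  imports Complex_Main "HOL-Library.While_Combinator"
begin

text \<open>A ring with n >= 3 vertices is represented by vertices 0,...,n-1, where
  vertex i is joined to vertex (i+1) mod n by an edge of weight w i.
  The homebase is vertex 0.\<close>

definition ring_adj :: "nat \<Rightarrow> nat \<Rightarrow> nat \<Rightarrow> bool" where
  "ring_adj n u v \<longleftrightarrow> u < n \<and> v < n \<and> (v = (u + 1) mod n \<or> u = (v + 1) mod n)"

definition ring_wt :: "nat \<Rightarrow> (nat \<Rightarrow> real) \<Rightarrow> nat \<Rightarrow> nat \<Rightarrow> real" where
  "ring_wt n w u v = (if v = (u + 1) mod n then w u else w v)"

datatype move = Invoke | Go nat nat  \<comment> \<open>Go i v: agent i (0-based) traverses the edge to v\<close>

text \<open>State: list of agent positions, set of explored vertices, accumulated cost.\<close>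
fun exec :: "nat \<Rightarrow> (nat \<Rightarrow> real) \<Rightarrow> real \<Rightarrow> move list \<Rightarrow> nat list \<times> nat set \<times> real
    \<Rightarrow> (nat list \<times> nat set \<times> real) option" where
  "exec n w q [] st = Some st"
| "exec n w q (Invoke # ms) (ps, V, c) = exec n w q ms (ps @ [0], insert 0 V, c + q)"
| "exec n w q (Go i v # ms) (ps, V, c) =
     (if i < length ps \<and> ring_adj n (ps ! i) v
      then exec n w q ms (ps[i := v], insert v V, c + ring_wt n w (ps ! i) v)
      else None)"

definition explore_costs :: "nat \<Rightarrow> (nat \<Rightarrow> real) \<Rightarrow> real \<Rightarrow> real set" where
  "explore_costs n w q = {c. \<exists>ms ps. exec n w q ms ([], {}, 0) = Some (ps, {..<n}, c)}"

definition ring_opt :: "nat \<Rightarrow> (nat \<Rightarrow> real) \<Rightarrow> real \<Rightarrow> real" where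
  "ring_opt n w q = Inf (explore_costs n w q)"

text \<open>Direction d of a1: the edge f_1 is the lighter edge at the homebase
  (ties broken towards vertex 1). Offset k in direction d is vertex (d*k) mod n.\<close>

definition rdir :: "nat \<Rightarrow> (nat \<Rightarrow> real) \<Rightarrow> int" where
  "rdir n w = (if w 0 \<le> w (n - 1) then 1 else -1)"

definition rpos :: "nat \<Rightarrow> int \<Rightarrow> nat \<Rightarrow> nat" where
  "rpos n d k = nat ((d * int k) mod int n)"

definition rfwd :: "nat \<Rightarrow> (nat \<Rightarrow> real) \<Rightarrow> int \<Rightarrow> nat \<Rightarrow> real" where
  "rfwd n w d k = ring_wt n w (rpos n d k) (rpos n d (Suc k))"

text \<open>Simulation state (phase, r, l, s, moves): a1 is at offset r in direction d
  (so R is the edge from offset r to r+1), a2 (if invoked) is at offset l in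
  direction -d (so L is the edge from offset l to l+1 in direction -d;
  before a2 is invoked l = 0 and L = f_{-1}); s is the flag.
  Phase 1/2/3 corresponds to steps (i)/(ii)/(iii). The procedure stops as
  soon as all vertices are explored, i.e. when r + l = n - 1.\<close>

type_synonym rstate = "nat \<times> nat \<times> nat \<times> bool \<times> move list"

definition ronline_step :: "nat \<Rightarrow> (nat \<Rightarrow> real) \<Rightarrow> real \<Rightarrow> rstate \<Rightarrow> rstate" where
  "ronline_step n w q st = (case st of (ph, r, l, s, ms) \<Rightarrow>
     (let d = rdir n w; wR = rfwd n w d r; wL = rfwd n w (-d) l;
          wfm1 = rfwd n w (-d) 0 in
      if ph = 1 then
        (if wL + q * (if s then 1 else 0) \<ge> wR
         then (1, Suc r, l, s, ms @ [Go 0 (rpos n d (Suc r))])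
         else (2, r, l, s, ms))
      else if ph = 2 then
        (if s \<and> wfm1 + q < wR
         then (3, r, Suc l, False, ms @ [Invoke, Go 1 (rpos n (-d) (Suc l))])
         else (3, r, l, s, ms))
      else
        (if \<not> s \<and> wL < wR
         then (3, r, Suc l, s, ms @ [Go 1 (rpos n (-d) (Suc l))])
         else (1, r, l, s, ms))))"

definition ring_online :: "nat \<Rightarrow> (nat \<Rightarrow> real) \<Rightarrow> real \<Rightarrow> move list option" where
  "ring_online n w q =
     map_option (\<lambda>(ph, r, l, s, ms). ms)
       (while_option (\<lambda>(ph, r, l, s, ms). r + l < n - 1) (ronline_step n w q)
          (1, 0, 0, True, [Invoke]))"

end

theory Submission
  imports Defs
begin

text \<open>Every exploring strategy invokes an agent and traverses all edges but at most one, since two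
  untraversed edges would cut off the arc between them; so its cost is at least q + W - w(e) for
  some edge e, where W is the total weight. RingOnline stops when its frontier edges R and L
  coincide in the last unexplored edge e', having traversed every other edge exactly once, so it
  pays q + W - w(e') with one agent and 2q + W - w(e') with two. With one agent, L = f_{-1} = e'
  throughout and every traversed edge weighs at most w(e') + q; with two agents, e' is a heaviest
  edge. In both cases the cost is at most 2(q + W - w(e)) for every edge e.\<close>

section \<open>Executions and the off-line lower bound\<close>

lemma exec_append:
  "exec n w q (ms1 @ ms2) st =
     (case exec n w q ms1 st of None \<Rightarrow> None | Some st' \<Rightarrow> exec n w q ms2 st')"
proof (induction ms1 arbitrary: st)
  case (Cons m ms1)
  then show ?case by (cases st; cases m) auto
qed simp

lemma exec_snoc_Invoke:
  "exec n w q ms st = Some (ps, V, c) \<Longrightarrow>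
   exec n w q (ms @ [Invoke]) st = Some (ps @ [0], insert 0 V, c + q)"
  by (simp add: exec_append)

lemma exec_snoc_Go:
  "exec n w q ms st = Some (ps, V, c) \<Longrightarrow> i < length ps \<Longrightarrow> ring_adj n (ps ! i) v \<Longrightarrow>
   exec n w q (ms @ [Go i v]) st = Some (ps[i := v], insert v V, c + ring_wt n w (ps ! i) v)"
  by (simp add: exec_append)

definition ring_edge :: "nat \<Rightarrow> nat \<Rightarrow> nat \<Rightarrow> nat" where
  "ring_edge n u v = (if v = (u + 1) mod n then u else v)"

lemma ring_wt_ring_edge: "ring_wt n w u v = w (ring_edge n u v)"
  by (simp add: ring_wt_def ring_edge_def)

fun traversed :: "nat \<Rightarrow> move list \<Rightarrow> nat list \<Rightarrow> nat list" where
  "traversed n [] ps = []"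
| "traversed n (Invoke # ms) ps = traversed n ms (ps @ [0])"
| "traversed n (Go i v # ms) ps =
     (if i < length ps \<and> ring_adj n (ps ! i) v
      then ring_edge n (ps ! i) v # traversed n ms (ps[i := v]) else [])"

definition invocations :: "move list \<Rightarrow> nat" where
  "invocations ms = length (filter (\<lambda>m. m = Invoke) ms)"

lemma exec_cost:
  "exec n w q ms (ps, V, c) = Some (ps', V', c') \<Longrightarrow>
   c' = c + q * real (invocations ms) + sum_list (map w (traversed n ms ps))"
proof (induction ms arbitrary: ps V c)
  case (Cons m ms)
  then show ?case
    by (cases m) (auto simp: invocations_def ring_wt_ring_edge algebra_simps
        split: if_splits dest!: Cons.IH)
qed (simp add: invocations_def)

lemma traversed_lt: "e \<in> set (traversed n ms ps) \<Longrightarrow> e < n"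
  by (induction n ms ps rule: traversed.induct)
    (auto simp: ring_adj_def ring_edge_def split: if_splits)

lemma ring_edge_entering_arc:
  assumes "ring_adj n u v" "j < n" "u \<notin> {Suc i..j}" "v \<in> {Suc i..j}"
  shows "ring_edge n u v = i \<or> ring_edge n u v = j"
proof (cases "v = (u + 1) mod n")
  case True
  moreover have "u + 1 < n"
  proof (rule ccontr)
    assume "\<not> u + 1 < n"
    then have "u + 1 = n" using assms(1) by (auto simp: ring_adj_def)
    then have "v = 0" using True by simp
    then show False using assms(4) by simp
  qed
  ultimately show ?thesis using assms(3,4) by (auto simp: ring_edge_def)
next
  case False
  then have "u = (v + 1) mod n" using assms(1) by (auto simp: ring_adj_def)
  then show ?thesis using False assms(2-4) by (cases "v + 1 < n") (auto simp: ring_edge_def)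
qed

lemma exec_avoids_arc:
  assumes "exec n w q ms (ps, V, c) = Some (ps', V', c')"
    and "i \<notin> set (traversed n ms ps)" "j \<notin> set (traversed n ms ps)" "j < n"
    and "\<forall>x\<in>set ps. x \<notin> {Suc i..j}" "\<forall>x\<in>V. x \<notin> {Suc i..j}"
  shows "\<forall>x\<in>V'. x \<notin> {Suc i..j}"
  using assms
proof (induction ms arbitrary: ps V c)
  case (Cons m ms)
  show ?case
  proof (cases m)
    case Invoke
    with Cons.prems show ?thesis by (intro Cons.IH[of "ps @ [0]" "insert 0 V" "c + q"]) auto
  next
    case (Go k v)
    with Cons.prems have ok: "k < length ps" "ring_adj n (ps ! k) v"
      by (auto split: if_splits)
    have "ps ! k \<notin> {Suc i..j}" using Cons.prems(5) ok(1) nth_mem by blast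
    then have "v \<notin> {Suc i..j}"
      using ring_edge_entering_arc[OF ok(2) \<open>j < n\<close>] Cons.prems(2,3) Go ok by auto
    then have "\<forall>x\<in>set (ps[k := v]). x \<notin> {Suc i..j}"
      using Cons.prems(5) set_update_subset_insert[of ps k v] by blast
    with Cons.prems Go ok \<open>v \<notin> {Suc i..j}\<close> show ?thesis
      by (intro Cons.IH[of "ps[k := v]" "insert v V" "c + ring_wt n w (ps ! k) v"]) auto
  qed
qed simp

lemma sum_set_le_sum_list:
  fixes f :: "'a \<Rightarrow> real"
  assumes "\<forall>x\<in>set xs. f x \<ge> 0"
  shows "sum f (set xs) \<le> sum_list (map f xs)"
  using assms by (induction xs) (auto simp: sum.insert_if)

lemma explore_cost_lower_bound:
  assumes n3: "n \<ge> 3" and wpos: "\<forall>i<n. w i > 0" and q0: "q \<ge> 0"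
    and ex: "exec n w q ms ([], {}, 0) = Some (ps, {..<n}, c)"
  shows "\<exists>e<n. q + (\<Sum>k<n. w k) - w e \<le> c"
proof -
  define T where "T = set (traversed n ms [])"
  have T_lt: "T \<subseteq> {..<n}" using traversed_lt unfolding T_def by blast
  have "invocations ms \<ge> 1"
  proof (cases ms)
    case Nil
    with ex have "{..<n} = ({} :: nat set)" by simp
    with n3 show ?thesis by (simp add: lessThan_empty_iff)
  next
    case (Cons m ms')
    with ex show ?thesis by (cases m) (auto simp: invocations_def)
  qed
  then have "q \<le> q * real (invocations ms)" using q0 by (simp add: mult_le_cancel_left1)
  moreover have "sum w T \<le> sum_list (map w (traversed n ms []))"
    unfolding T_def using wpos traversed_lt by (intro sum_set_le_sum_list) (auto intro: less_imp_le)
  ultimately have cost: "q + sum w T \<le> c"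
    using exec_cost[OF ex] by simp
  have one_missed: "j \<in> T" if "i < j" "j < n" "i \<notin> T" for i j
  proof (rule ccontr)
    assume "j \<notin> T"
    then have "\<forall>x\<in>{..<n}. x \<notin> {Suc i..j}"
      using exec_avoids_arc[OF ex] that unfolding T_def by auto
    with that show False by auto
  qed
  show ?thesis
  proof (cases "T = {..<n}")
    case True
    moreover have "w 0 > 0" using wpos n3 by simp
    ultimately show ?thesis using cost n3 by (intro exI[of _ 0]) auto
  next
    case False
    then obtain e where e: "e < n" "e \<notin> T" using T_lt by auto
    have "{..<n} - {e} \<subseteq> T"
      using one_missed[of _ e] one_missed[of e] e
      by (metis DiffE insertI1 lessThan_iff linorder_neqE_nat subsetI)
    then have "sum w ({..<n} - {e}) \<le> sum w T"
      using T_lt wpos by (intro sum_mono2) (auto intro: finite_subset less_imp_le)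
    with e cost show ?thesis by (intro exI[of _ e]) (simp add: sum_diff1)
  qed
qed

lemma le_twice_ring_opt:
  assumes "n \<ge> 3" "\<forall>i<n. w i > 0" "q \<ge> 0"
    and c: "c \<in> explore_costs n w q" and bound: "\<forall>e<n. c \<le> 2 * (q + (\<Sum>k<n. w k) - w e)"
  shows "c \<le> 2 * ring_opt n w q"
proof -
  have "c / 2 \<le> Inf (explore_costs n w q)"
  proof (rule cInf_greatest)
    fix x assume "x \<in> explore_costs n w q"
    then obtain ms ps where "exec n w q ms ([], {}, 0) = Some (ps, {..<n}, x)"
      unfolding explore_costs_def by blast
    then obtain e where "e < n" "q + (\<Sum>k<n. w k) - w e \<le> x"
      using explore_cost_lower_bound[OF assms(1-3)] by blast
    with bound show "c / 2 \<le> x" by force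
  qed (use c in blast)
  then show ?thesis unfolding ring_opt_def by simp
qed

section \<open>Offsets along the ring\<close>

lemma rpos_int: "n > 0 \<Longrightarrow> int (rpos n d k) = (d * int k) mod int n"
  by (simp add: rpos_def)

lemma rpos_lt: "n > 0 \<Longrightarrow> rpos n d k < n"
  using rpos_int[of n d k] by (metis of_nat_less_iff pos_mod_bound of_nat_0_less_iff)

lemma rpos_0 [simp]: "rpos n d 0 = 0"
  by (simp add: rpos_def)

lemma rpos_1_Suc: "n > 0 \<Longrightarrow> rpos n 1 (Suc k) = (rpos n 1 k + 1) mod n"
  by (rule int_int_eq[THEN iffD1]) (simp add: rpos_int zmod_int mod_add_right_eq)

lemma rpos_neg1_Suc: "n > 0 \<Longrightarrow> rpos n (-1) k = (rpos n (-1) (Suc k) + 1) mod n"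
  by (rule int_int_eq[THEN iffD1]) (simp add: rpos_int zmod_int mod_add_right_eq)

lemma ring_adj_rpos:
  "n > 0 \<Longrightarrow> d = 1 \<or> d = -1 \<Longrightarrow> ring_adj n (rpos n d k) (rpos n d (Suc k))"
  using rpos_lt[of n] rpos_1_Suc[of n k] rpos_neg1_Suc[of n k] unfolding ring_adj_def by auto

lemma rpos_1_eq: "k < n \<Longrightarrow> rpos n 1 k = k"
  by (rule int_int_eq[THEN iffD1]) (simp add: rpos_int)

lemma rpos_neg1_Suc_eq: "k < n \<Longrightarrow> rpos n (-1) (Suc k) = n - 1 - k"
proof (rule int_int_eq[THEN iffD1])
  assume k: "k < n"
  have "(- int (Suc k)) mod int n = (- int (Suc k) + int n) mod int n" by simp
  also have "\<dots> = - int (Suc k) + int n" using k by (intro mod_pos_pos_trivial) auto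
  finally show "int (rpos n (-1) (Suc k)) = int (n - 1 - k)" using k by (simp add: rpos_int)
qed

lemma rpos_uminus: "n > 0 \<Longrightarrow> j \<le> n \<Longrightarrow> rpos n (-d) j = rpos n d (n - j)"
proof (rule int_int_eq[THEN iffD1])
  assume "n > 0" "j \<le> n"
  then have "int (rpos n d (n - j)) = (- d * int j + d * int n) mod int n"
    by (simp add: rpos_int of_nat_diff algebra_simps)
  also have "\<dots> = (- d * int j) mod int n" by (rule mod_mult_self1)
  finally show "int (rpos n (-d) j) = int (rpos n d (n - j))" using \<open>n > 0\<close> by (simp add: rpos_int)
qed

lemma rpos_surj:
  assumes "n > 0" "d = 1 \<or> d = -1" "v < n"
  shows "\<exists>k<n. rpos n d k = v"
proof (cases "d = 1 \<or> v = 0")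
  case True
  with assms show ?thesis by (auto simp: rpos_1_eq intro: exI[of _ v] exI[of _ 0])
next
  case False
  with assms have "d = -1" "0 < v" by auto
  moreover have "rpos n (-1) (n - v) = v"
    using rpos_uminus[of n "n - v" 1] assms rpos_1_eq by simp
  ultimately show ?thesis using \<open>v < n\<close> by (intro exI[of _ "n - v"]) simp
qed

lemma mod_add_two_neq:
  fixes n v :: nat
  shows "n \<ge> 3 \<Longrightarrow> v < n \<Longrightarrow> (v + 2) mod n \<noteq> v"
proof (cases "v + 2 < n")
  case False
  assume "n \<ge> 3" "v < n"
  then have "(v + 2) mod n = v + 2 - n" using False by (simp add: mod_if)
  with \<open>n \<ge> 3\<close> False show ?thesis by linarith
qed simp

lemma rfwd_1: "k < n \<Longrightarrow> rfwd n w 1 k = w k"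
  using rpos_1_Suc[of n k] by (simp add: rfwd_def ring_wt_def rpos_1_eq)

text \<open>For n \<ge> 3 a step in direction -1 is never a step to the successor vertex, so ring_wt
  charges it the weight of its target vertex n - 1 - k.\<close>

lemma rfwd_neg1: "n \<ge> 3 \<Longrightarrow> k < n \<Longrightarrow> rfwd n w (-1) k = w (n - 1 - k)"
proof -
  assume n: "n \<ge> 3" and k: "k < n"
  let ?u = "rpos n (-1) k" and ?v = "rpos n (-1) (Suc k)"
  have "?u = (?v + 1) mod n" using n by (intro rpos_neg1_Suc) simp
  then have "(?u + 1) mod n = (?v + 2) mod n" by (metis mod_Suc_eq add_2_eq_Suc' Suc_eq_plus1)
  moreover have "(?v + 2) mod n \<noteq> ?v" using n by (intro mod_add_two_neq rpos_lt) simp_all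
  ultimately have "?v \<noteq> (?u + 1) mod n" by simp
  then have "rfwd n w (-1) k = w ?v" by (simp add: rfwd_def ring_wt_def)
  then show ?thesis using k by (simp add: rpos_neg1_Suc_eq)
qed

lemma rfwd_pos: "n > 0 \<Longrightarrow> \<forall>i<n. w i > 0 \<Longrightarrow> rfwd n w d k > 0"
  using rpos_lt[of n] by (simp add: rfwd_def ring_wt_def)

section \<open>The run of RingOnline\<close>

locale ring_online_run =
  fixes n :: nat and w :: "nat \<Rightarrow> real" and q :: real
  assumes n3: "n \<ge> 3" and wpos: "\<forall>i<n. w i > 0" and q0: "q \<ge> 0"
begin

abbreviation dir :: int where "dir \<equiv> rdir n w"
abbreviation right_wt :: "nat \<Rightarrow> real" where "right_wt \<equiv> rfwd n w dir"
abbreviation left_wt :: "nat \<Rightarrow> real" where "left_wt \<equiv> rfwd n w (-dir)"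
abbreviation total_wt :: real where "total_wt \<equiv> sum w {..<n}"

lemma n_pos: "n > 0"
  using n3 by simp

lemma dir_cases: "dir = 1 \<or> dir = -1"
  by (simp add: rdir_def)

lemma right_wt_pos: "right_wt k > 0"
  using rfwd_pos[OF n_pos wpos] .

lemma left_wt_eq_right_wt: "j < n \<Longrightarrow> left_wt j = right_wt (n - 1 - j)"
  using dir_cases by (auto simp: rfwd_1 rfwd_neg1[OF n3])

lemma edge_weight_right_wt: "e < n \<Longrightarrow> \<exists>k<n. w e = right_wt k"
  using dir_cases
  by (auto simp: rfwd_1 rfwd_neg1[OF n3] intro: exI[of _ e] exI[of _ "n - 1 - e"])

lemma sum_right_wt: "sum right_wt {..<n} = total_wt"
proof (cases "dir = 1")
  case True
  then show ?thesis using rfwd_1[of _ n w] by simp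
next
  case False
  then have "sum right_wt {..<n} = (\<Sum>k<n. w (n - Suc k))"
    using dir_cases rfwd_neg1[OF n3] by (intro sum.cong) auto
  also have "\<dots> = total_wt" by (rule sum.nat_diff_reindex)
  finally show ?thesis .
qed

lemma right_wt_le_total: "k < n \<Longrightarrow> right_wt k \<le> total_wt"
  unfolding sum_right_wt[symmetric] using right_wt_pos
  by (intro member_le_sum) (auto intro: less_imp_le)

lemma right_wt_add_le_total:
  assumes "i < n" "j < n" "i \<noteq> j"
  shows "right_wt i + right_wt j \<le> total_wt"
proof -
  have "sum right_wt {i, j} \<le> sum right_wt {..<n}"
    using assms right_wt_pos by (intro sum_mono2) (auto intro: less_imp_le)
  then show ?thesis using assms(3) sum_right_wt by simp
qed

lemma sum_right_left_wt:
  "r + l = n - 1 \<Longrightarrow> sum right_wt {..<r} + sum left_wt {..<l} + right_wt r = total_wt"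
proof (induction l arbitrary: r)
  case 0
  then have "Suc r = n" using n3 by simp
  then have "sum right_wt {..<Suc r} = total_wt" using sum_right_wt by simp
  then show ?case by simp
next
  case (Suc l)
  then have "l < n" "n - 1 - l = Suc r" by linarith+
  then have "left_wt l = right_wt (Suc r)" using left_wt_eq_right_wt[of l] by simp
  with Suc.IH[of "Suc r"] Suc.prems show ?case by simp
qed

definition agents :: "bool \<Rightarrow> nat \<Rightarrow> nat \<Rightarrow> nat list" where
  "agents s r l = (if s then [rpos n dir r] else [rpos n dir r, rpos n (-dir) l])"

definition explored :: "nat \<Rightarrow> nat \<Rightarrow> nat set" where
  "explored r l = rpos n dir ` {..r} \<union> rpos n (-dir) ` {..l}"

definition run_cost :: "bool \<Rightarrow> nat \<Rightarrow> nat \<Rightarrow> real" where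
  "run_cost s r l = q * (if s then 1 else 2) + sum right_wt {..<r} + sum left_wt {..<l}"

lemma ring_adj_right: "ring_adj n (rpos n dir k) (rpos n dir (Suc k))"
  using ring_adj_rpos[OF n_pos dir_cases] .

lemma ring_adj_left: "ring_adj n (rpos n (-dir) k) (rpos n (-dir) (Suc k))"
  using ring_adj_rpos[OF n_pos, of "-dir"] dir_cases by auto

lemma exec_advance_right:
  "exec n w q ms st = Some (agents s r l, explored r l, run_cost s r l) \<Longrightarrow>
   exec n w q (ms @ [Go 0 (rpos n dir (Suc r))]) st =
     Some (agents s (Suc r) l, explored (Suc r) l, run_cost s (Suc r) l)"
  by (drule exec_snoc_Go[of _ _ _ _ _ _ _ _ 0 "rpos n dir (Suc r)"])
    (auto simp: agents_def explored_def run_cost_def rfwd_def atMost_Suc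
      intro: ring_adj_right)

lemma exec_advance_left:
  "exec n w q ms st = Some (agents False r l, explored r l, run_cost False r l) \<Longrightarrow>
   exec n w q (ms @ [Go 1 (rpos n (-dir) (Suc l))]) st =
     Some (agents False r (Suc l), explored r (Suc l), run_cost False r (Suc l))"
  by (drule exec_snoc_Go[of _ _ _ _ _ _ _ _ 1 "rpos n (-dir) (Suc l)"])
    (auto simp: agents_def explored_def run_cost_def rfwd_def atMost_Suc
      intro: ring_adj_left)

lemma exec_invoke_second:
  "exec n w q ms st = Some (agents True r 0, explored r 0, run_cost True r 0) \<Longrightarrow>
   exec n w q (ms @ [Invoke]) st = Some (agents False r 0, explored r 0, run_cost False r 0)"
  by (drule exec_snoc_Invoke)
    (auto simp: agents_def explored_def run_cost_def insert_absorb intro: image_eqI[of 0])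

lemma explored_all: "r + l = n - 1 \<Longrightarrow> explored r l = {..<n}"
proof
  show "explored r l \<subseteq> {..<n}" using rpos_lt[OF n_pos] by (auto simp: explored_def)
next
  assume rl: "r + l = n - 1"
  show "{..<n} \<subseteq> explored r l"
  proof
    fix v assume "v \<in> {..<n}"
    then obtain k where k: "k < n" "rpos n dir k = v" using rpos_surj[OF n_pos dir_cases] by auto
    show "v \<in> explored r l"
    proof (cases "k \<le> r")
      case False
      have "rpos n (-dir) (n - k) = v" using k rpos_uminus[OF n_pos, of "n - k" dir] by simp
      moreover have "n - k \<le> l" using False rl k by linarith
      ultimately show ?thesis by (auto simp: explored_def)
    qed (use k in \<open>auto simp: explored_def\<close>)
  qed
qed

fun run_inv :: "rstate \<Rightarrow> bool" where
  "run_inv (ph, r, l, s, ms) \<longleftrightarrow>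
     ph \<in> {1, 2, 3} \<and> r + l \<le> n - 1 \<and> (s \<longrightarrow> l = 0) \<and>
     exec n w q ms ([], {}, 0) = Some (agents s r l, explored r l, run_cost s r l) \<and>
     (s \<longrightarrow> (\<forall>k<r. right_wt k \<le> left_wt 0 + q) \<and> (ph = 3 \<longrightarrow> right_wt r \<le> left_wt 0 + q)) \<and>
     (\<not> s \<longrightarrow> (\<forall>k<r. right_wt k \<le> max (right_wt r) (left_wt l)) \<and>
             (\<forall>j<l. left_wt j \<le> max (right_wt r) (left_wt l)))"

lemma ronline_step_eq:
  "ronline_step n w q (ph, r, l, s, ms) =
    (if ph = 1 then
       (if right_wt r \<le> left_wt l + q * (if s then 1 else 0)
        then (1, Suc r, l, s, ms @ [Go 0 (rpos n dir (Suc r))])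
        else (2, r, l, s, ms))
     else if ph = 2 then
       (if s \<and> left_wt 0 + q < right_wt r
        then (3, r, Suc l, False, ms @ [Invoke, Go 1 (rpos n (-dir) (Suc l))])
        else (3, r, l, s, ms))
     else
       (if \<not> s \<and> left_wt l < right_wt r
        then (3, r, Suc l, s, ms @ [Go 1 (rpos n (-dir) (Suc l))])
        else (1, r, l, s, ms)))"
  unfolding ronline_step_def Let_def by simp

lemma run_inv_advance_right:
  assumes "run_inv (1, r, l, s, ms)" "r + l < n - 1"
    and "right_wt r \<le> left_wt l + q * (if s then 1 else 0)"
  shows "run_inv (1, Suc r, l, s, ms @ [Go 0 (rpos n dir (Suc r))])"
  using assms exec_advance_right by (cases s) (auto simp: less_Suc_eq max_def)

lemma run_inv_invoke_second:
  assumes "run_inv (2, r, 0, True, ms)" "r < n - 1" "left_wt 0 + q < right_wt r"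
  shows "run_inv (3, r, Suc 0, False, ms @ [Invoke, Go 1 (rpos n (-dir) (Suc 0))])"
proof -
  have "exec n w q ((ms @ [Invoke]) @ [Go 1 (rpos n (-dir) (Suc 0))]) ([], {}, 0) =
      Some (agents False r (Suc 0), explored r (Suc 0), run_cost False r (Suc 0))"
    using assms(1) by (intro exec_advance_left exec_invoke_second) simp
  with assms q0 show ?thesis by (auto simp: max_def)
qed

lemma run_inv_advance_left:
  assumes "run_inv (3, r, l, False, ms)" "r + l < n - 1" "left_wt l < right_wt r"
  shows "run_inv (3, r, Suc l, False, ms @ [Go 1 (rpos n (-dir) (Suc l))])"
  using assms exec_advance_left by (auto simp: less_Suc_eq max_def)

lemma run_inv_step:
  assumes inv: "run_inv st" and go: "(\<lambda>(ph, r, l, s, ms). r + l < n - 1) st"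
  shows "run_inv (ronline_step n w q st)"
proof -
  obtain ph r l s ms where st: "st = (ph, r, l, s, ms)" by (cases st)
  note inv = inv[unfolded st]
  from go have go: "r + l < n - 1" by (simp add: st)
  consider "ph = 1" | "ph = 2" | "ph = 3" using inv by auto
  then show ?thesis
  proof cases
    case 1
    show ?thesis
    proof (cases "right_wt r \<le> left_wt l + q * (if s then 1 else 0)")
      case True
      with 1 have "ronline_step n w q st = (1, Suc r, l, s, ms @ [Go 0 (rpos n dir (Suc r))])"
        by (simp add: st ronline_step_eq)
      then show ?thesis using run_inv_advance_right[OF inv[unfolded 1] go True] by simp
    next
      case False
      with 1 inv show ?thesis by (simp add: st ronline_step_eq)
    qed
  next
    case 2
    show ?thesis
    proof (cases "s \<and> left_wt 0 + q < right_wt r")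
      case True
      with inv have "l = 0" by simp
      with True 2 have step: "ronline_step n w q st =
          (3, r, Suc 0, False, ms @ [Invoke, Go 1 (rpos n (-dir) (Suc 0))])"
        by (simp add: st ronline_step_eq)
      have "run_inv (2, r, 0, True, ms)" "r < n - 1"
        using inv[unfolded 2] go True \<open>l = 0\<close> by simp_all
      then show ?thesis unfolding step using True by (intro run_inv_invoke_second) simp_all
    next
      case False
      with 2 inv show ?thesis by (auto simp: st ronline_step_eq)
    qed
  next
    case 3
    show ?thesis
    proof (cases "\<not> s \<and> left_wt l < right_wt r")
      case True
      with 3 have "ronline_step n w q st = (3, r, Suc l, False, ms @ [Go 1 (rpos n (-dir) (Suc l))])"
        by (simp add: st ronline_step_eq)
      moreover have "run_inv (3, r, l, False, ms)" using inv[unfolded 3] True by simp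
      ultimately show ?thesis using run_inv_advance_left go True by (simp del: run_inv.simps)
    next
      case False
      with 3 have "ronline_step n w q st = (1, r, l, s, ms)"
        by (auto simp: st ronline_step_eq)
      with 3 inv show ?thesis by simp
    qed
  qed
qed

text \<open>Phase weights: 2 for phase 3, 3 for phase 2, and 1 or 4 for phase 1 according to whether a1
  is about to move. Phase 3 passes to phase 1 without a move only when a1 is then about to move
  (for a lone agent by the last clause of the invariant), so every step either moves an agent or
  lowers the phase weight.\<close>

fun run_measure :: "rstate \<Rightarrow> nat" where
  "run_measure (ph, r, l, s, ms) = 4 * (n - 1 - (r + l)) +
     (if ph = 1 then if right_wt r \<le> left_wt l + q * (if s then 1 else 0) then 1 else 4
      else if ph = 2 then 3 else 2)"

lemma run_measure_decreases:
  assumes inv: "run_inv st" and go: "(\<lambda>(ph, r, l, s, ms). r + l < n - 1) st"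
  shows "run_measure (ronline_step n w q st) < run_measure st"
proof -
  obtain ph r l s ms where st: "st = (ph, r, l, s, ms)" by (cases st)
  note inv = inv[unfolded st]
  from go have go: "r + l < n - 1" by (simp add: st)
  then have "4 * (n - 1 - (Suc r + l)) + 4 \<le> 4 * (n - 1 - (r + l))"
    "4 * (n - 1 - (r + Suc l)) + 4 \<le> 4 * (n - 1 - (r + l))" by simp_all
  with inv show ?thesis by (auto simp: st ronline_step_eq)
qed

lemma run_cost_final:
  assumes inv: "run_inv (ph, r, l, s, ms)" and full: "r + l = n - 1" and k: "k < n"
  shows "run_cost s r l \<le> 2 * (q + total_wt - right_wt k)"
proof -
  have r: "r < n" and "l < n" using full n3 by auto
  moreover have "n - 1 - l = r" using full by simp
  ultimately have last: "left_wt l = right_wt r" using left_wt_eq_right_wt[of l] by simp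
  have wt_split: "sum right_wt {..<r} + sum left_wt {..<l} + right_wt r = total_wt"
    using sum_right_left_wt[OF full] .
  show ?thesis
  proof (cases s)
    case True
    with inv have "l = 0" by simp
    with True wt_split have cost: "run_cost s r l = q + total_wt - right_wt r"
      by (simp add: run_cost_def)
    show ?thesis
    proof (cases "k = r")
      case True
      with cost right_wt_le_total[OF r] q0 show ?thesis by simp
    next
      case False
      with k full \<open>l = 0\<close> have "k < r" by simp
      with inv \<open>s\<close> \<open>l = 0\<close> last have "right_wt k \<le> right_wt r + q" by simp
      moreover have "right_wt k + right_wt r \<le> total_wt" using right_wt_add_le_total[OF k r False] .
      ultimately show ?thesis using cost right_wt_pos[of r] by simp
    qed
  next
    case False
    have "right_wt k \<le> right_wt r"
    proof (cases "k \<le> r")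
      case True
      with inv False last show ?thesis by (cases "k = r") auto
    next
      case False
      then have "n - 1 - k < l" "n - 1 - k < n" using full k by auto
      moreover have "left_wt (n - 1 - k) = right_wt k"
        using left_wt_eq_right_wt[of "n - 1 - k"] k by simp
      ultimately show ?thesis using inv \<open>\<not> s\<close> last by force
    qed
    with False wt_split right_wt_le_total[OF k] show ?thesis by (simp add: run_cost_def)
  qed
qed

lemma ring_online_result:
  "\<exists>ms ps c. ring_online n w q = Some ms \<and> exec n w q ms ([], {}, 0) = Some (ps, {..<n}, c) \<and>
     (\<forall>e<n. c \<le> 2 * (q + total_wt - w e))"
proof -
  let ?go = "\<lambda>(ph, r, l, s, ms). r + l < n - 1"
  have init: "run_inv (1, 0, 0, True, [Invoke])"
    by (simp add: agents_def explored_def run_cost_def)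
  then obtain t where t: "while_option ?go (ronline_step n w q) (1, 0, 0, True, [Invoke]) = Some t"
    using measure_while_option_Some[of run_inv ?go "ronline_step n w q" run_measure]
      run_inv_step run_measure_decreases by blast
  obtain ph r l s ms where t_eq: "t = (ph, r, l, s, ms)" by (cases t)
  have inv: "run_inv t" using while_option_rule[where P = run_inv, OF run_inv_step t init] .
  moreover have "\<not> ?go t" using while_option_stop[OF t] .
  ultimately have full: "r + l = n - 1" by (simp add: t_eq)
  have "ring_online n w q = Some ms" unfolding ring_online_def using t t_eq by simp
  moreover have "exec n w q ms ([], {}, 0) = Some (agents s r l, {..<n}, run_cost s r l)"
    using inv explored_all[OF full] by (simp add: t_eq)
  moreover have "run_cost s r l \<le> 2 * (q + total_wt - w e)" if "e < n" for e
    using edge_weight_right_wt[OF that] run_cost_final[OF inv[unfolded t_eq] full] by auto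
  ultimately show ?thesis by blast
qed

end

theorem lemma1:
  fixes n :: nat and w :: "nat \<Rightarrow> real" and q :: real
  assumes "n \<ge> 3" and "\<forall>i<n. w i > 0" and "q \<ge> 0"
  shows "\<exists>ms ps c. ring_online n w q = Some ms
           \<and> exec n w q ms ([], {}, 0) = Some (ps, {..<n}, c)
           \<and> c \<le> 2 * ring_opt n w q"
proof -
  interpret ring_online_run n w q
    using assms by unfold_locales
  obtain ms ps c where run: "ring_online n w q = Some ms"
      "exec n w q ms ([], {}, 0) = Some (ps, {..<n}, c)"
      and bound: "\<forall>e<n. c \<le> 2 * (q + (\<Sum>k<n. w k) - w e)"
    using ring_online_result by blast
  then have "c \<in> explore_costs n w q"
    unfolding explore_costs_def by blast
  with run show ?thesis
    using le_twice_ring_opt[OF assms _ bound] by blast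
qed

end
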